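(* Let $D$ be a drawing in $[0,a]\times[0,b]$ with segments $e_1,\dots,e_\ell$, let $K\subset\mathbb{R}^\ell$ be the linear space of intensity vectors $(s_1,\dots,s_\ell)$ satisfying Kirchhoff's law at every interior node of $D$, and $d=\dim K$. Call a parametrization an injective map $\tau:\{1,\dots,d\}\to\{1,\dots,\ell\}$ such that the map $K\to\mathbb{R}^d$, $(s_i)_i\mapsto(s_{\tau(j)})_j$, is bijective, and let $\mathfrak{D}_\tau:\mathbb{R}^d\to K\subset\mathbb{R}^\ell$ be its inverse. Then for any two parametrizations $\tau,\tau'$, $$\left|\det\left(\mathfrak{D}_\tau^{-1}\circ\mathfrak{D}_{\tau'}\right)\right|=1,$$ where $\mathfrak{D}_\tau^{-1}:K\to\mathbb{R}^d$ denotes the inverse of $\mathfrak{D}_\tau$ onto its image $K$.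
   Context: A drawing in the box $[0,a]\times[0,b]$ is a finite collection of weighted segments $((x_-,y_-),(x_+,y_+),s)$, each vertical ($x_-=x_+$, $y_-<y_+$) or horizontal ($y_-=y_+$, $x_-<x_+$), with real intensity $s$, whose endpoints are nodes. Nodes on the box boundary are entries (bottom/left sides, where a segment starts) and exits (top/right sides, where a segment ends); every other node is interior and is the meeting point of segments coming from the south and/or west and leaving to the north and/or east (splits: one incoming and two outgoing segments; turns: one incoming, one outgoing of the other direction; coalescences: two incoming, one outgoing; crossings: two incoming, two outgoing). Kirchhoff's law at an interior node: the sum of the intensities of the segments arriving from the south and the west equals the sum of the intensities of the segments leaving to the north and the east. *)

theory Defs
  imports "Jordan_Normal_Form.VS_Connect"
begin

text \<open>Geometry of drawings. A point is a pair (x,y); a segment is a pair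
  (start point, end point). Segments are indexed 0,...,l-1 by their position in a list.\<close>

type_synonym point = "real \<times> real"
type_synonym segment = "point \<times> point"

definition vertical_seg :: "segment \<Rightarrow> bool" where
  "vertical_seg e \<longleftrightarrow> fst (fst e) = fst (snd e) \<and> snd (fst e) < snd (snd e)"

definition horizontal_seg :: "segment \<Rightarrow> bool" where
  "horizontal_seg e \<longleftrightarrow> snd (fst e) = snd (snd e) \<and> fst (fst e) < fst (snd e)"

definition in_box :: "real \<Rightarrow> real \<Rightarrow> point \<Rightarrow> bool" where
  "in_box a b p \<longleftrightarrow> 0 \<le> fst p \<and> fst p \<le> a \<and> 0 \<le> snd p \<and> snd p \<le> b"

definition on_entry_side :: "real \<Rightarrow> real \<Rightarrow> point \<Rightarrow> bool" where
  "on_entry_side a b p \<longleftrightarrow> in_box a b p \<and> (fst p = 0 \<or> snd p = 0)"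

definition on_exit_side :: "real \<Rightarrow> real \<Rightarrow> point \<Rightarrow> bool" where
  "on_exit_side a b p \<longleftrightarrow> in_box a b p \<and> (fst p = a \<or> snd p = b)"

definition on_boundary :: "real \<Rightarrow> real \<Rightarrow> point \<Rightarrow> bool" where
  "on_boundary a b p \<longleftrightarrow> on_entry_side a b p \<or> on_exit_side a b p"

definition nodes :: "segment list \<Rightarrow> point set" where
  "nodes S = fst ` set S \<union> snd ` set S"

definition interior_node :: "real \<Rightarrow> real \<Rightarrow> segment list \<Rightarrow> point \<Rightarrow> bool" where
  "interior_node a b S p \<longleftrightarrow> p \<in> nodes S \<and> \<not> on_boundary a b p"

definition from_south :: "segment list \<Rightarrow> point \<Rightarrow> nat set" where
  "from_south S p = {i. i < length S \<and> vertical_seg (S ! i) \<and> snd (S ! i) = p}"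

definition from_west :: "segment list \<Rightarrow> point \<Rightarrow> nat set" where
  "from_west S p = {i. i < length S \<and> horizontal_seg (S ! i) \<and> snd (S ! i) = p}"

definition to_north :: "segment list \<Rightarrow> point \<Rightarrow> nat set" where
  "to_north S p = {i. i < length S \<and> vertical_seg (S ! i) \<and> fst (S ! i) = p}"

definition to_east :: "segment list \<Rightarrow> point \<Rightarrow> nat set" where
  "to_east S p = {i. i < length S \<and> horizontal_seg (S ! i) \<and> fst (S ! i) = p}"

definition incoming :: "segment list \<Rightarrow> point \<Rightarrow> nat set" where
  "incoming S p = from_south S p \<union> from_west S p"

definition outgoing :: "segment list \<Rightarrow> point \<Rightarrow> nat set" where
  "outgoing S p = to_north S p \<union> to_east S p"

definition interior_node_ok :: "segment list \<Rightarrow> point \<Rightarrow> bool" where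
  "interior_node_ok S p \<longleftrightarrow>
     (let cS = card (from_south S p); cW = card (from_west S p);
          cN = card (to_north S p); cE = card (to_east S p) in
      cS \<le> 1 \<and> cW \<le> 1 \<and> cN \<le> 1 \<and> cE \<le> 1 \<and>
      ((cS + cW = 1 \<and> cN + cE = 2) \<comment> \<open>split\<close>
       \<or> (cS = 1 \<and> cW = 0 \<and> cN = 0 \<and> cE = 1) \<or> (cS = 0 \<and> cW = 1 \<and> cN = 1 \<and> cE = 0) \<comment> \<open>turn\<close>
       \<or> (cS + cW = 2 \<and> cN + cE = 1) \<comment> \<open>coalescence\<close>
       \<or> (cS + cW = 2 \<and> cN + cE = 2) \<comment> \<open>crossing\<close>))"

definition drawing :: "real \<Rightarrow> real \<Rightarrow> segment list \<Rightarrow> bool" where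
  "drawing a b S \<longleftrightarrow>
     0 < a \<and> 0 < b \<and> distinct S \<and>
     (\<forall>e \<in> set S. (vertical_seg e \<or> horizontal_seg e) \<and> in_box a b (fst e) \<and> in_box a b (snd e)) \<and>
     (\<forall>p \<in> nodes S. on_boundary a b p \<longrightarrow>
        (on_entry_side a b p \<and> incoming S p = {}) \<comment> \<open>entry: segments only start here\<close>
      \<or> (on_exit_side a b p \<and> outgoing S p = {})) \<comment> \<open>exit: segments only end here\<close> \<and>
     (\<forall>p. interior_node a b S p \<longrightarrow> interior_node_ok S p)"

definition kirchhoff_space :: "real \<Rightarrow> real \<Rightarrow> segment list \<Rightarrow> real vec set" where
  "kirchhoff_space a b S =
     {s \<in> carrier_vec (length S). \<forall>p. interior_node a b S p \<longrightarrow>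
        (\<Sum>i \<in> incoming S p. s $ i) = (\<Sum>i \<in> outgoing S p. s $ i)}"

definition kirchhoff_dim :: "real \<Rightarrow> real \<Rightarrow> segment list \<Rightarrow> nat" where
  "kirchhoff_dim a b S =
     vectorspace.dim class_ring
       ((module_vec TYPE(real) (length S))\<lparr>carrier := kirchhoff_space a b S\<rparr>)"

definition coord_map :: "nat \<Rightarrow> (nat \<Rightarrow> nat) \<Rightarrow> real vec \<Rightarrow> real vec" where
  "coord_map d \<tau> s = vec d (\<lambda>j. s $ \<tau> j)"

definition parametrization :: "real \<Rightarrow> real \<Rightarrow> segment list \<Rightarrow> (nat \<Rightarrow> nat) \<Rightarrow> bool" where
  "parametrization a b S \<tau> \<longleftrightarrow>
     (let d = kirchhoff_dim a b S in
      inj_on \<tau> {..<d} \<and> \<tau> ` {..<d} \<subseteq> {..<length S} \<and>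
      bij_betw (coord_map d \<tau>) (kirchhoff_space a b S) (carrier_vec d))"

definition param_inv :: "real \<Rightarrow> real \<Rightarrow> segment list \<Rightarrow> (nat \<Rightarrow> nat) \<Rightarrow> real vec \<Rightarrow> real vec" where
  "param_inv a b S \<tau> = the_inv_into (kirchhoff_space a b S) (coord_map (kirchhoff_dim a b S) \<tau>)"

definition matrix_of_map :: "nat \<Rightarrow> (real vec \<Rightarrow> real vec) \<Rightarrow> real mat" where
  "matrix_of_map d f = mat d d (\<lambda>(j, k). f (unit_vec d k) $ j)"

end

theory Submission
  imports Defs
begin

text \<open>Read the drawing as a directed graph whose edges are the segments and whose constrained
  vertices are the interior nodes; K is then the kernel of its incidence matrix, which is totally
  unimodular. Concretely: if the values of a flow outside a set N of edges determine it, then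
  integral values outside N force integral values on N. Contracting an edge e of N into its
  other endpoint removes e, one node and one Kirchhoff equation, and that equation expresses the
  value on e as a signed sum of the other values, so induction on N applies. Consequently the
  change-of-parametrization matrix and its inverse both have integer entries, and its
  determinant is a unit of the integers.\<close>

definition net_flow ::
    "'e set \<Rightarrow> ('e \<Rightarrow> 'v) \<Rightarrow> ('e \<Rightarrow> 'v) \<Rightarrow> ('e \<Rightarrow> 'a::ab_group_add) \<Rightarrow> 'v \<Rightarrow> 'a" where
  "net_flow E head tail s x = (\<Sum>i\<in>{i\<in>E. head i = x}. s i) - (\<Sum>i\<in>{i\<in>E. tail i = x}. s i)"

definition kirchhoff_law ::
    "'e set \<Rightarrow> 'v set \<Rightarrow> ('e \<Rightarrow> 'v) \<Rightarrow> ('e \<Rightarrow> 'v) \<Rightarrow> ('e \<Rightarrow> 'a::ab_group_add) \<Rightarrow> bool" where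
  "kirchhoff_law E V head tail s \<longleftrightarrow> (\<forall>x\<in>V. net_flow E head tail s x = 0)"

lemma net_flow_eq_sum:
  fixes s :: "'e \<Rightarrow> 'a::ring_1"
  assumes "finite E"
  shows "net_flow E head tail s x = (\<Sum>i\<in>E. s i * (of_bool (head i = x) - of_bool (tail i = x)))"
proof -
  have "(\<Sum>i\<in>{i\<in>E. P i}. s i) = (\<Sum>i\<in>E. s i * of_bool (P i))" for P
    unfolding sum.inter_filter[OF assms] by (intro sum.cong) auto
  then show ?thesis
    by (simp add: net_flow_def right_diff_distrib sum_subtractf)
qed

lemma net_flow_cong:
  "(\<And>i. i \<in> E \<Longrightarrow> s i = s' i) \<Longrightarrow> net_flow E head tail s x = net_flow E head tail s' x"
  unfolding net_flow_def by (intro arg_cong2[where f = "(-)"] sum.cong) auto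

lemma kirchhoff_law_cong:
  "(\<And>i. i \<in> E \<Longrightarrow> s i = s' i) \<Longrightarrow> kirchhoff_law E V head tail s = kirchhoff_law E V head tail s'"
  unfolding kirchhoff_law_def using net_flow_cong by metis

lemma net_flow_remove:
  fixes s :: "'e \<Rightarrow> 'a::ring_1"
  assumes "finite E" "e \<in> E"
  shows "net_flow E head tail s x =
    s e * (of_bool (head e = x) - of_bool (tail e = x)) + net_flow (E - {e}) head tail s x"
  using assms by (simp add: net_flow_eq_sum sum.remove)

lemma endpoint_sign:
  assumes "{head e, tail e} = {p, q}" "p \<noteq> q"
  shows "of_bool (head e = p) - of_bool (tail e = p) = (1::'a::ring_1) \<or>
    of_bool (head e = p) - of_bool (tail e = p) = (-1::'a)"
  using assms by (auto simp: doubleton_eq_iff)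

text \<open>Contracting an edge between p and q moves all edge ends at p to q.\<close>

definition redirect :: "'v \<Rightarrow> 'v \<Rightarrow> ('e \<Rightarrow> 'v) \<Rightarrow> 'e \<Rightarrow> 'v" where
  "redirect p q f i = (if f i = p then q else f i)"

lemma net_flow_contract:
  fixes s :: "'e \<Rightarrow> 'a::ring_1"
  assumes "finite E" "e \<in> E" "{head e, tail e} = {p, q}" "p \<noteq> q" "x \<noteq> p"
  shows "net_flow (E - {e}) (redirect p q head) (redirect p q tail) s x =
    net_flow E head tail s x + (if x = q then net_flow E head tail s p else 0)"
proof -
  have redirect_ind: "of_bool (redirect p q f i = x) =
      of_bool (f i = x) + (if x = q then of_bool (f i = p) else (0::'a))" for f and i
    using assms(4,5) by (auto simp: redirect_def)
  let ?w = "\<lambda>y i. s i * (of_bool (head i = y) - of_bool (tail i = y))"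
  have "net_flow (E - {e}) (redirect p q head) (redirect p q tail) s x =
      (\<Sum>i\<in>E - {e}. ?w x i + (if x = q then ?w p i else 0))"
    unfolding net_flow_eq_sum[OF finite_Diff[OF assms(1)]] redirect_ind
    by (intro sum.cong) (simp_all add: algebra_simps)
  also have "\<dots> = (\<Sum>i\<in>E. ?w x i + (if x = q then ?w p i else 0))"
    using assms by (subst (2) sum.remove[of _ e]) auto
  also have "\<dots> = net_flow E head tail s x + (if x = q then net_flow E head tail s p else 0)"
    using assms(1) by (simp add: net_flow_eq_sum sum.distrib)
  finally show ?thesis .
qed

lemma kirchhoff_law_contract_iff:
  fixes s :: "'e \<Rightarrow> 'a::ring_1"
  assumes "finite E" "e \<in> E" "{head e, tail e} = {p, q}" "p \<noteq> q" "p \<in> V"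
  shows "kirchhoff_law E V head tail s \<longleftrightarrow>
    kirchhoff_law (E - {e}) (V - {p}) (redirect p q head) (redirect p q tail) s \<and>
    net_flow E head tail s p = 0"
  using assms(5) unfolding kirchhoff_law_def
  by (force simp: net_flow_contract[of E e head tail p q, OF assms(1-4)])

definition determined_off ::
    "'e set \<Rightarrow> 'e set \<Rightarrow> 'v set \<Rightarrow> ('e \<Rightarrow> 'v) \<Rightarrow> ('e \<Rightarrow> 'v) \<Rightarrow> bool" where
  "determined_off E N V head tail \<longleftrightarrow> (\<forall>v :: 'e \<Rightarrow> real.
     kirchhoff_law E V head tail v \<longrightarrow> (\<forall>i\<in>E - N. v i = 0) \<longrightarrow> (\<forall>i\<in>N. v i = 0))"

definition integral_off ::
    "'e set \<Rightarrow> 'e set \<Rightarrow> 'v set \<Rightarrow> ('e \<Rightarrow> 'v) \<Rightarrow> ('e \<Rightarrow> 'v) \<Rightarrow> bool" where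
  "integral_off E N V head tail \<longleftrightarrow> (\<forall>s :: 'e \<Rightarrow> real.
     kirchhoff_law E V head tail s \<longrightarrow> (\<forall>i\<in>E - N. s i \<in> \<int>) \<longrightarrow> (\<forall>i\<in>N. s i \<in> \<int>))"

lemma determined_off_edge:
  assumes "finite E" "N \<subseteq> E" "e \<in> N" "determined_off E N V head tail"
  obtains p q where "p \<in> V" "p \<noteq> q" "{head e, tail e} = {p, q}"
proof -
  define v where "v i = (of_bool (i = e) :: real)" for i
  have "net_flow E head tail v x = of_bool (head e = x) - of_bool (tail e = x)" for x
    using assms(1-3) by (auto simp: net_flow_eq_sum v_def)
  moreover have "v e \<noteq> 0" "\<forall>i\<in>E - N. v i = 0"
    using assms(3) by (auto simp: v_def)
  ultimately have "\<not> kirchhoff_law E V head tail v"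
    using assms(3,4) unfolding determined_off_def by blast
  then have "head e \<noteq> tail e" "head e \<in> V \<or> tail e \<in> V"
    unfolding kirchhoff_law_def
    by (auto simp: \<open>\<And>x. net_flow E head tail v x = _\<close> of_bool_def split: if_splits)
  then show ?thesis
    using that by (metis insert_commute)
qed

lemma determined_off_contract:
  assumes "finite E" "e \<in> E" "e \<notin> N" "{head e, tail e} = {p, q}" "p \<noteq> q" "p \<in> V"
    and "determined_off E (insert e N) V head tail"
  shows "determined_off (E - {e}) N (V - {p}) (redirect p q head) (redirect p q tail)"
  unfolding determined_off_def
proof (intro allI impI)
  fix v' :: "_ \<Rightarrow> real"
  assume law': "kirchhoff_law (E - {e}) (V - {p}) (redirect p q head) (redirect p q tail) v'"
    and zero: "\<forall>i\<in>E - {e} - N. v' i = 0"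
  define \<sigma> :: real where "\<sigma> = of_bool (head e = p) - of_bool (tail e = p)"
  have \<sigma>: "\<sigma> = 1 \<or> \<sigma> = -1"
    unfolding \<sigma>_def using assms(4,5) by (rule endpoint_sign)
  have net_p: "net_flow E head tail s p = s e * \<sigma> + net_flow (E - {e}) head tail s p" for s
    unfolding \<sigma>_def using assms(1,2) by (rule net_flow_remove)
  \<comment> \<open>extend v' to e so that Kirchhoff's law also holds at the contracted node p\<close>
  define v where "v = v'(e := - \<sigma> * net_flow (E - {e}) head tail v' p)"
  have agree: "\<And>i. i \<in> E - {e} \<Longrightarrow> v i = v' i"
    by (simp add: v_def)
  have "net_flow E head tail v p = v e * \<sigma> + net_flow (E - {e}) head tail v' p"
    using net_flow_cong[of "E - {e}" v v', OF agree] unfolding net_p by simp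
  also have "\<dots> = 0"
    using \<sigma> by (auto simp: v_def)
  finally have "net_flow E head tail v p = 0" .
  moreover have "kirchhoff_law (E - {e}) (V - {p}) (redirect p q head) (redirect p q tail) v"
    using agree law' by (rule kirchhoff_law_cong[THEN iffD2])
  ultimately have "kirchhoff_law E V head tail v"
    using kirchhoff_law_contract_iff[of E e head tail p q V, OF assms(1,2,4-6)] by blast
  moreover have "\<forall>i\<in>E - insert e N. v i = 0"
    using zero agree by auto
  ultimately have "\<forall>i\<in>insert e N. v i = 0"
    using assms(7) unfolding determined_off_def by blast
  then show "\<forall>i\<in>N. v' i = 0"
    using assms(3) by (auto simp: v_def split: if_splits)
qed

lemma integral_off_uncontract:
  assumes "finite E" "e \<in> E" "{head e, tail e} = {p, q}" "p \<noteq> q" "p \<in> V"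
    and "integral_off (E - {e}) N (V - {p}) (redirect p q head) (redirect p q tail)"
  shows "integral_off E (insert e N) V head tail"
  unfolding integral_off_def
proof (intro allI impI)
  fix s :: "_ \<Rightarrow> real"
  assume law: "kirchhoff_law E V head tail s" and int: "\<forall>i\<in>E - insert e N. s i \<in> \<int>"
  define \<sigma> :: real where "\<sigma> = of_bool (head e = p) - of_bool (tail e = p)"
  have \<sigma>: "\<sigma> = 1 \<or> \<sigma> = -1"
    unfolding \<sigma>_def using assms(3,4) by (rule endpoint_sign)
  have net_p: "net_flow E head tail s p = s e * \<sigma> + net_flow (E - {e}) head tail s p"
    unfolding \<sigma>_def using assms(1,2) by (rule net_flow_remove)
  have law': "kirchhoff_law (E - {e}) (V - {p}) (redirect p q head) (redirect p q tail) s"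
    and "net_flow E head tail s p = 0"
    using law kirchhoff_law_contract_iff[of E e head tail p q V, OF assms(1-5)] by blast+
  have "\<forall>i\<in>E - {e} - N. s i \<in> \<int>"
    using int by blast
  then have "\<forall>i\<in>N. s i \<in> \<int>"
    using assms(6) law' unfolding integral_off_def by blast
  then have "\<forall>i\<in>E - {e}. s i \<in> \<int>"
    using int by blast
  then have "net_flow (E - {e}) head tail s p \<in> \<int>"
    unfolding net_flow_def by (intro Ints_diff Ints_sum) auto
  moreover have "s e * \<sigma> = - net_flow (E - {e}) head tail s p"
    using net_p \<open>net_flow E head tail s p = 0\<close> by (simp add: eq_neg_iff_add_eq_0)
  then have "s e = - net_flow (E - {e}) head tail s p * \<sigma>"
    using \<sigma> by auto
  moreover have "\<sigma> \<in> \<int>"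
    using \<sigma> by auto
  ultimately have "s e \<in> \<int>"
    by simp
  then show "\<forall>i\<in>insert e N. s i \<in> \<int>"
    using \<open>\<forall>i\<in>N. s i \<in> \<int>\<close> by blast
qed

theorem determined_off_imp_integral_off:
  assumes "finite E" "N \<subseteq> E" "determined_off E N V head tail"
  shows "integral_off E N V head tail"
proof -
  have "finite N"
    using assms(1,2) by (rule finite_subset[rotated])
  then show ?thesis
    using assms
  proof (induction N arbitrary: E V head tail rule: finite_induct)
    case empty
    then show ?case by (simp add: integral_off_def)
  next
    case (insert e N)
    obtain p q where pq: "p \<in> V" "p \<noteq> q" "{head e, tail e} = {p, q}"
      using determined_off_edge[OF insert.prems(1,2) insertI1 insert.prems(3)] .
    have "e \<in> E" "finite (E - {e})" "N \<subseteq> E - {e}"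
      using insert.hyps(2) insert.prems(1,2) by auto
    have "determined_off (E - {e}) N (V - {p}) (redirect p q head) (redirect p q tail)"
      using determined_off_contract[of E e N head tail p q V, OF insert.prems(1) \<open>e \<in> E\<close>
          insert.hyps(2) pq(3,2,1) insert.prems(3)] .
    then have "integral_off (E - {e}) N (V - {p}) (redirect p q head) (redirect p q tail)"
      using insert.IH[OF \<open>finite (E - {e})\<close> \<open>N \<subseteq> E - {e}\<close>] by blast
    then show ?case
      using integral_off_uncontract[of E e head tail p q V N, OF insert.prems(1) \<open>e \<in> E\<close>
          pq(3,2,1)] by blast
  qed
qed

lemma det_Ints:
  assumes "A \<in> carrier_mat n n" "\<And>i j. i < n \<Longrightarrow> j < n \<Longrightarrow> A $$ (i, j) \<in> \<int>"
  shows "det A \<in> \<int>"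
  unfolding det_def'[OF assms(1)]
  using assms(2) by (intro Ints_sum Ints_mult Ints_prod Ints_of_int) (auto dest: permutes_in_image)

lemma abs_det_eq_1_if_integral_inverse:
  fixes A B :: "real mat"
  assumes "A \<in> carrier_mat n n" "B \<in> carrier_mat n n" "B * A = 1\<^sub>m n"
    and "\<And>i j. i < n \<Longrightarrow> j < n \<Longrightarrow> A $$ (i, j) \<in> \<int>"
    and "\<And>i j. i < n \<Longrightarrow> j < n \<Longrightarrow> B $$ (i, j) \<in> \<int>"
  shows "\<bar>det A\<bar> = 1"
proof -
  obtain m where m: "det A = of_int m"
    using det_Ints[OF assms(1,4)] by (auto elim: Ints_cases)
  obtain m' where m': "det B = of_int m'"
    using det_Ints[OF assms(2,5)] by (auto elim: Ints_cases)
  have "det B * det A = 1"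
    using det_mult[OF assms(2,1)] assms(3) by simp
  then have "m' * m = 1"
    unfolding m m' by (metis of_int_eq_1_iff of_int_mult)
  then show ?thesis
    unfolding m by (auto simp: zmult_eq_1_iff)
qed

lemma incoming_outgoing_subset: "incoming S p \<subseteq> {..<length S}" "outgoing S p \<subseteq> {..<length S}"
  unfolding incoming_def outgoing_def from_south_def from_west_def to_north_def to_east_def
  by auto

lemma kirchhoff_space_eq:
  assumes "\<forall>e\<in>set S. vertical_seg e \<or> horizontal_seg e"
  shows "kirchhoff_space a b S = {s \<in> carrier_vec (length S).
    kirchhoff_law {..<length S} {p. interior_node a b S p} (\<lambda>i. snd (S ! i)) (\<lambda>i. fst (S ! i))
      (\<lambda>i. s $ i)}"
proof -
  have "incoming S p = {i \<in> {..<length S}. snd (S ! i) = p}"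
    and "outgoing S p = {i \<in> {..<length S}. fst (S ! i) = p}" for p
    using assms unfolding incoming_def outgoing_def from_south_def from_west_def to_north_def
      to_east_def by (auto dest: nth_mem)
  then show ?thesis
    unfolding kirchhoff_space_def kirchhoff_law_def net_flow_def by auto
qed

lemma kirchhoff_space_lincomb:
  assumes "\<And>k. k \<in> A \<Longrightarrow> w k \<in> kirchhoff_space a b S"
  shows "vec (length S) (\<lambda>i. \<Sum>k\<in>A. c k * w k $ i) \<in> kirchhoff_space a b S"
proof -
  let ?u = "vec (length S) (\<lambda>i. \<Sum>k\<in>A. c k * w k $ i)"
  have sum_u: "(\<Sum>i\<in>I. ?u $ i) = (\<Sum>k\<in>A. c k * (\<Sum>i\<in>I. w k $ i))"
    if "I \<subseteq> {..<length S}" for I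
  proof -
    have "(\<Sum>i\<in>I. ?u $ i) = (\<Sum>i\<in>I. \<Sum>k\<in>A. c k * w k $ i)"
      using that by (intro sum.cong) auto
    also have "\<dots> = (\<Sum>k\<in>A. \<Sum>i\<in>I. c k * w k $ i)"
      by (rule sum.swap)
    finally show ?thesis
      by (simp add: sum_distrib_left)
  qed
  show ?thesis
    unfolding kirchhoff_space_def
  proof (intro CollectI conjI allI impI)
    fix p
    assume "interior_node a b S p"
    then have "(\<Sum>i\<in>incoming S p. w k $ i) = (\<Sum>i\<in>outgoing S p. w k $ i)" if "k \<in> A" for k
      using assms[OF that] unfolding kirchhoff_space_def by blast
    then show "(\<Sum>i\<in>incoming S p. ?u $ i) = (\<Sum>i\<in>outgoing S p. ?u $ i)"
      unfolding sum_u[OF incoming_outgoing_subset(1)] sum_u[OF incoming_outgoing_subset(2)]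
      by (intro sum.cong) auto
  qed simp
qed

lemma zero_mem_kirchhoff_space: "0\<^sub>v (length S) \<in> kirchhoff_space a b S"
  using kirchhoff_space_lincomb[of "{}"] by (simp add: zero_vec_def)

context
  fixes a b :: real and S :: "segment list" and \<tau> :: "nat \<Rightarrow> nat"
  assumes param: "parametrization a b S \<tau>"
begin

lemma parametrization_index: "j < kirchhoff_dim a b S \<Longrightarrow> \<tau> j < length S"
  using param unfolding parametrization_def Let_def by auto

lemma parametrization_bij:
  "bij_betw (coord_map (kirchhoff_dim a b S) \<tau>) (kirchhoff_space a b S)
    (carrier_vec (kirchhoff_dim a b S))"
  using param unfolding parametrization_def Let_def by auto

lemma coord_map_inj:
  "s \<in> kirchhoff_space a b S \<Longrightarrow> s' \<in> kirchhoff_space a b S \<Longrightarrow>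
    coord_map (kirchhoff_dim a b S) \<tau> s = coord_map (kirchhoff_dim a b S) \<tau> s' \<Longrightarrow> s = s'"
  using bij_betw_imp_inj_on[OF parametrization_bij] by (auto dest: inj_onD)

lemma param_inv_mem:
  "y \<in> carrier_vec (kirchhoff_dim a b S) \<Longrightarrow> param_inv a b S \<tau> y \<in> kirchhoff_space a b S"
  unfolding param_inv_def using parametrization_bij
  by (auto intro: the_inv_into_into bij_betw_imp_inj_on simp: bij_betw_imp_surj_on)

lemma coord_map_param_inv:
  "y \<in> carrier_vec (kirchhoff_dim a b S) \<Longrightarrow>
    coord_map (kirchhoff_dim a b S) \<tau> (param_inv a b S \<tau> y) = y"
  unfolding param_inv_def using parametrization_bij
  by (auto intro: f_the_inv_into_f_bij_betw)

lemma param_inv_unit_vec_index: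
  assumes "j < kirchhoff_dim a b S" "k < kirchhoff_dim a b S"
  shows "param_inv a b S \<tau> (unit_vec (kirchhoff_dim a b S) k) $ \<tau> j = of_bool (j = k)"
proof -
  let ?d = "kirchhoff_dim a b S"
  have "param_inv a b S \<tau> (unit_vec ?d k) $ \<tau> j =
      coord_map ?d \<tau> (param_inv a b S \<tau> (unit_vec ?d k)) $ j"
    using assms(1) by (simp add: coord_map_def)
  also have "\<dots> = of_bool (j = k)"
    using assms by (simp add: coord_map_param_inv)
  finally show ?thesis .
qed

lemma kirchhoff_space_expansion:
  assumes w: "w \<in> kirchhoff_space a b S" and i: "i < length S"
  shows "w $ i = (\<Sum>m<kirchhoff_dim a b S.
    w $ \<tau> m * param_inv a b S \<tau> (unit_vec (kirchhoff_dim a b S) m) $ i)"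
proof -
  let ?d = "kirchhoff_dim a b S"
  let ?u = "vec (length S) (\<lambda>i. \<Sum>m<?d. w $ \<tau> m * param_inv a b S \<tau> (unit_vec ?d m) $ i)"
  have u: "?u \<in> kirchhoff_space a b S"
    by (intro kirchhoff_space_lincomb param_inv_mem) simp
  have "coord_map ?d \<tau> ?u = coord_map ?d \<tau> w"
  proof (rule eq_vecI)
    fix j
    assume "j < dim_vec (coord_map ?d \<tau> w)"
    then have j: "j < ?d"
      by (simp add: coord_map_def)
    then have "coord_map ?d \<tau> ?u $ j = (\<Sum>m<?d. w $ \<tau> m * of_bool (j = m))"
      by (simp add: coord_map_def parametrization_index param_inv_unit_vec_index)
    also have "\<dots> = coord_map ?d \<tau> w $ j"
      using j by (simp add: coord_map_def)
    finally show "coord_map ?d \<tau> ?u $ j = coord_map ?d \<tau> w $ j" .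
  qed (simp add: coord_map_def)
  then have "?u = w"
    using coord_map_inj[OF u w] by blast
  then have "w $ i = ?u $ i"
    by simp
  then show ?thesis
    using i by simp
qed

end

lemma kirchhoff_space_integral:
  assumes "drawing a b S" and param: "parametrization a b S \<tau>"
    and w: "w \<in> kirchhoff_space a b S"
    and w_int: "\<And>j. j < kirchhoff_dim a b S \<Longrightarrow> w $ \<tau> j \<in> \<int>"
    and i: "i < length S"
  shows "w $ i \<in> \<int>"
proof -
  let ?d = "kirchhoff_dim a b S" and ?l = "length S"
  let ?N = "{..<?l} - \<tau> ` {..<?d}" and ?V = "{p. interior_node a b S p}"
  let ?head = "\<lambda>i. snd (S ! i)" and ?tail = "\<lambda>i. fst (S ! i)"
  have "\<forall>e\<in>set S. vertical_seg e \<or> horizontal_seg e"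
    using assms(1) by (simp add: drawing_def)
  note K = kirchhoff_space_eq[OF this]
  have "determined_off {..<?l} ?N ?V ?head ?tail"
    unfolding determined_off_def
  proof (intro allI impI)
    fix v :: "nat \<Rightarrow> real"
    assume law: "kirchhoff_law {..<?l} ?V ?head ?tail v" and zero: "\<forall>i\<in>{..<?l} - ?N. v i = 0"
    have "kirchhoff_law {..<?l} ?V ?head ?tail (\<lambda>i. vec ?l v $ i)"
      using _ law by (rule kirchhoff_law_cong[THEN iffD2]) simp
    then have v_mem: "vec ?l v \<in> kirchhoff_space a b S"
      unfolding K by simp
    have "coord_map ?d \<tau> (vec ?l v) = coord_map ?d \<tau> (0\<^sub>v ?l)"
      using zero parametrization_index[OF param] by (auto simp: coord_map_def)
    then have "vec ?l v = 0\<^sub>v ?l"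
      using coord_map_inj[OF param v_mem zero_mem_kirchhoff_space] by blast
    then show "\<forall>i\<in>?N. v i = 0"
      by (metis DiffD1 index_vec index_zero_vec(1) lessThan_iff)
  qed
  then have "integral_off {..<?l} ?N ?V ?head ?tail"
    by (intro determined_off_imp_integral_off) auto
  moreover have "kirchhoff_law {..<?l} ?V ?head ?tail (\<lambda>i. w $ i)"
    using w unfolding K by simp
  moreover have "\<forall>i\<in>{..<?l} - ?N. w $ i \<in> \<int>"
    using w_int by auto
  ultimately have "\<forall>i\<in>?N. w $ i \<in> \<int>"
    unfolding integral_off_def by blast
  then show ?thesis
    using i \<open>\<forall>i\<in>{..<?l} - ?N. w $ i \<in> \<int>\<close> by blast
qed

definition transition_matrix ::
    "real \<Rightarrow> real \<Rightarrow> segment list \<Rightarrow> (nat \<Rightarrow> nat) \<Rightarrow> (nat \<Rightarrow> nat) \<Rightarrow> real mat" where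
  "transition_matrix a b S \<tau> \<tau>' =
     matrix_of_map (kirchhoff_dim a b S) (coord_map (kirchhoff_dim a b S) \<tau> \<circ> param_inv a b S \<tau>')"

lemma transition_matrix_carrier:
  "transition_matrix a b S \<tau> \<tau>' \<in> carrier_mat (kirchhoff_dim a b S) (kirchhoff_dim a b S)"
  by (simp add: transition_matrix_def matrix_of_map_def)

lemma transition_matrix_index:
  "j < kirchhoff_dim a b S \<Longrightarrow> k < kirchhoff_dim a b S \<Longrightarrow>
    transition_matrix a b S \<tau> \<tau>' $$ (j, k) =
      param_inv a b S \<tau>' (unit_vec (kirchhoff_dim a b S) k) $ \<tau> j"
  by (simp add: transition_matrix_def matrix_of_map_def coord_map_def)

lemma transition_matrix_mult:
  assumes "parametrization a b S \<tau>" "parametrization a b S \<tau>'"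
  shows "transition_matrix a b S \<tau>' \<tau> * transition_matrix a b S \<tau> \<tau>' = 1\<^sub>m (kirchhoff_dim a b S)"
proof (rule eq_matI)
  let ?d = "kirchhoff_dim a b S"
  fix j k
  assume "j < dim_row (1\<^sub>m ?d)" "k < dim_col (1\<^sub>m ?d)"
  then have j: "j < ?d" and k: "k < ?d"
    by simp_all
  let ?w = "param_inv a b S \<tau>' (unit_vec ?d k)"
  have "(transition_matrix a b S \<tau>' \<tau> * transition_matrix a b S \<tau> \<tau>') $$ (j, k) =
      (\<Sum>m<?d. transition_matrix a b S \<tau>' \<tau> $$ (j, m) * transition_matrix a b S \<tau> \<tau>' $$ (m, k))"
    using j k by (simp add: transition_matrix_def matrix_of_map_def scalar_prod_def atLeast0LessThan)
  also have "\<dots> = (\<Sum>m<?d. ?w $ \<tau> m * param_inv a b S \<tau> (unit_vec ?d m) $ \<tau>' j)"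
    using j k by (intro sum.cong) (simp_all add: transition_matrix_index)
  also have "\<dots> = ?w $ \<tau>' j"
    using kirchhoff_space_expansion[OF assms(1) param_inv_mem[OF assms(2)]]
      parametrization_index[OF assms(2) j] by simp
  also have "\<dots> = 1\<^sub>m ?d $$ (j, k)"
    using j k by (simp add: param_inv_unit_vec_index[OF assms(2)])
  finally show "(transition_matrix a b S \<tau>' \<tau> * transition_matrix a b S \<tau> \<tau>') $$ (j, k) =
      1\<^sub>m ?d $$ (j, k)" .
qed (simp_all add: transition_matrix_def matrix_of_map_def)

lemma transition_matrix_Ints:
  assumes "drawing a b S" "parametrization a b S \<tau>" "parametrization a b S \<tau>'"
    and "j < kirchhoff_dim a b S" "k < kirchhoff_dim a b S"
  shows "transition_matrix a b S \<tau> \<tau>' $$ (j, k) \<in> \<int>"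
proof -
  let ?w = "param_inv a b S \<tau>' (unit_vec (kirchhoff_dim a b S) k)"
  have "?w $ \<tau> j \<in> \<int>"
  proof (rule kirchhoff_space_integral[OF assms(1,3)])
    show "?w \<in> kirchhoff_space a b S"
      by (simp add: param_inv_mem[OF assms(3)])
    show "?w $ \<tau>' j' \<in> \<int>" if "j' < kirchhoff_dim a b S" for j'
      using param_inv_unit_vec_index[OF assms(3) that assms(5)] by simp
    show "\<tau> j < length S"
      by (rule parametrization_index[OF assms(2,4)])
  qed
  then show ?thesis
    using transition_matrix_index[OF assms(4,5)] by simp
qed

theorem lemma3:
  fixes a b :: real and S :: "segment list" and \<tau> \<tau>' :: "nat \<Rightarrow> nat"
  assumes "drawing a b S"
    and "parametrization a b S \<tau>"
    and "parametrization a b S \<tau>'"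
  shows "\<bar>det (matrix_of_map (kirchhoff_dim a b S)
            (coord_map (kirchhoff_dim a b S) \<tau> \<circ> param_inv a b S \<tau>'))\<bar> = 1"
proof -
  let ?d = "kirchhoff_dim a b S"
  have "\<bar>det (transition_matrix a b S \<tau> \<tau>')\<bar> = 1"
  proof (rule abs_det_eq_1_if_integral_inverse)
    show "transition_matrix a b S \<tau>' \<tau> * transition_matrix a b S \<tau> \<tau>' = 1\<^sub>m ?d"
      using assms(2,3) by (rule transition_matrix_mult)
    show "transition_matrix a b S \<tau> \<tau>' $$ (j, k) \<in> \<int>"
      and "transition_matrix a b S \<tau>' \<tau> $$ (j, k) \<in> \<int>" if "j < ?d" "k < ?d" for j k
      using transition_matrix_Ints assms that by blast+
  qed (rule transition_matrix_carrier)+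
  then show ?thesis
    unfolding transition_matrix_def .
qed

end
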